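(* Fix $\vartheta\in\mathbb{C}$, let $r_1,r_2$ be the two roots (listed with multiplicity, so $r_1=r_2=-1$ if $\vartheta=0$) of $\vartheta-(\mathtt{h}+1)^2$, let $\omega=3+\max(\mathrm{Re}\, r_1,\mathrm{Re}\, r_2)$ and $\mathbb{C}_\omega=\{z\in\mathbb{C}: \mathrm{Re}\,z\in[\omega,\omega+2)\}$. Let $u=c\prod_{t\in\mathbb{C}_\omega}(\mathtt{h}-t)^{\mathtt{m}(t)}$ with $c\in\mathbb{C}^\times$ and $\mathtt{m}:\mathbb{C}_\omega\to\mathbb{Z}$ of finite support. Let $K_u\subset\mathbb{C}(\mathtt{h})$ be the $\mathbb{C}$-linear span of: (i) $\mathbb{C}[\mathtt{h}]$; (ii) for each $s\in\mathbb{C}_\omega$ with $\mathtt{m}(s)<0$, the elements $\frac{1}{(\mathtt{h}-s-2i)^k}$ with $i\in\mathbb{Z}_{\geq0}$ and $1\leq k\leq-\mathtt{m}(s)$; (iii) for each $s\in\mathbb{C}_\omega$ with $\mathtt{m}(s)>0$, the elements $\frac{1}{(\mathtt{h}-s+2i)^k}$ with $i\in\mathbb{Z}_{>0}$ and $1\leq k\leq \mathtt{m}(s)-|\{j\in\{1,2\}: r_j\in\{s-4,s-6,\dots,s-2i\}\}|$. Then $K_u=L_u$.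
   Context: $\mathfrak{g}=\mathfrak{sl}_2(\mathbb{C})$ with basis $\mathtt{e},\mathtt{f},\mathtt{h}$, $[\mathtt{h},\mathtt{e}]=2\mathtt{e}$, $[\mathtt{h},\mathtt{f}]=-2\mathtt{f}$, $[\mathtt{e},\mathtt{f}]=\mathtt{h}$; Casimir element $\mathtt{c}=(\mathtt{h}+1)^2+4\mathtt{f}\mathtt{e}$; $U_\vartheta=U(\mathfrak{g})/U(\mathfrak{g})(\mathtt{c}-\vartheta)$. Let $\Bbbk=\mathbb{C}(\mathtt{h})$, $\sigma$ the automorphism of $\Bbbk$ fixing $\mathbb{C}$ with $\sigma(\mathtt{h})=\mathtt{h}-2$, and $R=\Bbbk[x,x^{-1},\sigma]$ (skew Laurent polynomials: $xr=\sigma(r)x$ for $r\in\Bbbk$). The assignment $\mathtt{e}\mapsto x$, $\mathtt{f}\mapsto\frac{\vartheta-(\mathtt{h}+1)^2}{4}x^{-1}$, $\mathtt{h}\mapsto\mathtt{h}$ gives an injective algebra homomorphism $U_\vartheta\to R$. $N_u$ is $\Bbbk$ with the $R$-module structure where $\Bbbk$ acts by multiplication and $x\cdot b=\sigma(b)u$; as a $U_\vartheta$-module, $\mathtt{h}$ acts by multiplication, $\mathtt{e}\cdot b=\sigma(b)u$ and $\mathtt{f}\cdot b=\frac{\vartheta-(\mathtt{h}+1)^2}{4}\cdot\frac{\sigma^{-1}(b)}{\sigma^{-1}(u)}$. It is known that $N_u$, viewed as a $U_\vartheta$-module, has a unique simple submodule; this is denoted $L_u$ (and $K_u$ is regarded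 as a subspace of $N_u=\mathbb{C}(\mathtt{h})$). *)

theory Defs
  imports Complex_Main "HOL-Computational_Algebra.Computational_Algebra"
begin

type_synonym ratfun = "complex poly fract"

definition hvar :: ratfun where
  "hvar = to_fract [:0, 1:]"

definition cst :: "complex \<Rightarrow> ratfun" where
  "cst a = to_fract [:a:]"

text \<open>Shift automorphism: b(h) maps to b(h + a).  sigma = shift (-2), sigma inverse = shift 2.\<close>
definition shift :: "complex \<Rightarrow> ratfun \<Rightarrow> ratfun" where
  "shift a b = (case (SOME (p, q). q \<noteq> 0 \<and> b = Fract p q) of (p, q) \<Rightarrow>
      Fract (pcompose p [:a, 1:]) (pcompose q [:a, 1:]))"

definition sigma :: "ratfun \<Rightarrow> ratfun" where
  "sigma = shift (-2)"

definition sigma_inv :: "ratfun \<Rightarrow> ratfun" where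
  "sigma_inv = shift 2"

definition act_h :: "ratfun \<Rightarrow> ratfun" where
  "act_h b = hvar * b"

definition act_e :: "ratfun \<Rightarrow> ratfun \<Rightarrow> ratfun" where
  "act_e u b = sigma b * u"

definition act_f :: "complex \<Rightarrow> ratfun \<Rightarrow> ratfun \<Rightarrow> ratfun" where
  "act_f \<theta> u b = ((cst \<theta> - (hvar + 1)^2) / cst 4) * (sigma_inv b / sigma_inv u)"

text \<open>U_theta-submodules of N_u: complex subspaces stable under h, e, f
  (U_theta is generated by e, f, h).\<close>
definition is_submodule :: "complex \<Rightarrow> ratfun \<Rightarrow> ratfun set \<Rightarrow> bool" where
  "is_submodule \<theta> u M \<longleftrightarrow>
     0 \<in> M \<and> (\<forall>x\<in>M. \<forall>y\<in>M. x + y \<in> M) \<and> (\<forall>a. \<forall>x\<in>M. cst a * x \<in> M) \<and>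
     (\<forall>x\<in>M. act_h x \<in> M) \<and> (\<forall>x\<in>M. act_e u x \<in> M) \<and> (\<forall>x\<in>M. act_f \<theta> u x \<in> M)"

definition is_simple_submodule :: "complex \<Rightarrow> ratfun \<Rightarrow> ratfun set \<Rightarrow> bool" where
  "is_simple_submodule \<theta> u M \<longleftrightarrow> is_submodule \<theta> u M \<and> M \<noteq> {0} \<and>
     (\<forall>M'. is_submodule \<theta> u M' \<and> M' \<subseteq> M \<longrightarrow> M' = {0} \<or> M' = M)"

definition L_u :: "complex \<Rightarrow> ratfun \<Rightarrow> ratfun set" where
  "L_u \<theta> u = (THE M. is_simple_submodule \<theta> u M)"

definition cspan :: "ratfun set \<Rightarrow> ratfun set" where
  "cspan S = {(\<Sum>x\<in>T. cst (c x) * x) | T c. finite T \<and> T \<subseteq> S}"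

end

(*
  Write elements of C(h) as p / prod (h - w) over a multiset of poles. Then e translates the
  poles by +2 and multiplies by u, while f translates them by -2 and multiplies by
  -(h - r1)(h - r2) / (4 sigma^-1(u)). Let B(w) be the largest k such that 1/(h - w)^k is one of
  the generators (ii), (iii). The rational functions whose pole order at every w is at most B(w)
  form a submodule, because the bound drops by at most m(w) under e and by at most
  -m(w + 2) + [w = r1] + [w = r2] under f; by partial fractions this submodule is K_u.

  It lies in every nonzero submodule M. First, 1 is in M: the polynomials in M form an ideal with
  a generator g, and if g had roots, e would force its leftmost root to be a zero of u (real part
  at least omega) and f would force its rightmost root to be r1, r2 or a pole of u shifted by -2
  (real part below omega). Starting from 1 and applying e to the right of a pole of u, or f to
  the left of a zero of u, and removing the numerator by a Bezout identity, one obtains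
  1/(h - w)^B(w) in M for every w, hence all of K_u by partial fractions.
*)

theory Submission
  imports Defs "HOL-Computational_Algebra.Field_as_Ring"
begin

section \<open>Polynomials with prescribed roots\<close>

definition root_poly :: "'a::comm_ring_1 multiset \<Rightarrow> 'a poly" where
  "root_poly X = (\<Prod>z\<in>#X. [:-z, 1:])"

lemma root_poly_empty [simp]: "root_poly {#} = 1"
  by (simp add: root_poly_def)

lemma root_poly_add_mset [simp]: "root_poly (add_mset z X) = [:-z, 1:] * root_poly X"
  by (simp add: root_poly_def)

lemma root_poly_union [simp]: "root_poly (X + Y) = root_poly X * root_poly Y"
  by (simp add: root_poly_def)

lemma root_poly_replicate_mset: "root_poly (replicate_mset k z) = [:-z, 1:] ^ k"
  by (induction k) auto

lemma root_poly_sum: "root_poly (\<Sum>t\<in>S. f t) = (\<Prod>t\<in>S. root_poly (f t))"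
  by (induction S rule: infinite_finite_induct) auto

lemma root_poly_nonzero [simp]: "root_poly X \<noteq> (0 :: 'a::idom poly)"
  by (induction X) (auto simp del: mult_pCons_left)

lemma poly_root_poly_eq_0_iff: "poly (root_poly X) w = (0 :: 'a::idom) \<longleftrightarrow> w \<in># X"
  by (induction X) (auto simp del: mult_pCons_left)

lemma order_root_poly: "order w (root_poly X) = count X (w :: 'a::idom)"
proof (induction X)
  case (add z X)
  have "order w [:-z, 1:] = (if z = w then 1 else 0)"
    using order_power_n_n[of w 1] by (auto intro: order_0I)
  then show ?case
    using add order_mult[of "[:-z, 1:]" "root_poly X" w] by (auto simp del: mult_pCons_left)
qed simp

definition translate_mset :: "'a::ab_group_add \<Rightarrow> 'a multiset \<Rightarrow> 'a multiset" where
  "translate_mset a X = image_mset (\<lambda>z. z + a) X"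

lemma translate_mset_union [simp]:
  "translate_mset a (X + Y) = translate_mset a X + translate_mset a Y"
  by (simp add: translate_mset_def)

lemma count_translate_mset [simp]: "count (translate_mset a X) w = count X (w - a)"
proof -
  have "(\<lambda>z. z + a) -` {w} \<inter> set_mset X = (if w - a \<in># X then {w - a} else {})"
    by (auto simp: algebra_simps)
  then show ?thesis
    by (auto simp: translate_mset_def count_image_mset not_in_iff)
qed

lemma pcompose_root_poly: "root_poly X \<circ>\<^sub>p [:-a, 1:] = root_poly (translate_mset a X)"
proof (induction X)
  case (add z X)
  have "[:-z, 1:] \<circ>\<^sub>p [:-a, 1:] = [:-(z + a), 1:]"
    by (simp add: pcompose_pCons)
  then show ?case
    using add by (simp add: translate_mset_def pcompose_mult del: mult_pCons_left)
qed (simp add: translate_mset_def pcompose_1)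

lemma root_poly_cancel:
  "to_fract (N * root_poly A) / to_fract (root_poly D)
     = to_fract (N * root_poly (A - D)) / to_fract (root_poly (D - A))"
proof -
  have "A = (A - D) + (A \<inter># D)" and "D = (D - A) + (A \<inter># D)"
    by (simp_all add: multiset_eq_iff) linarith+
  then have "root_poly A = root_poly (A - D) * root_poly (A \<inter># D)"
    and "root_poly D = root_poly (D - A) * root_poly (A \<inter># D)"
    by (metis root_poly_union)+
  then show ?thesis
    by simp
qed

lemma poly_roots_extremal_Re:
  fixes g :: "complex poly"
  assumes "g \<noteq> 0" "degree g \<noteq> 0"
  obtains w0 w1 where "poly g w0 = 0" "poly g w1 = 0"
    "\<forall>z. poly g z = 0 \<longrightarrow> Re w0 \<le> Re z \<and> Re z \<le> Re w1"
proof -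
  define Z where "Z = {z. poly g z = 0}"
  have fin: "finite (Re ` Z)"
    using poly_roots_finite[OF assms(1)] by (simp add: Z_def)
  have "\<exists>z. poly g z = 0"
    by (rule fundamental_theorem_of_algebra_alt) (use assms in auto)
  then have ne: "Re ` Z \<noteq> {}"
    by (simp add: Z_def)
  obtain w0 where "w0 \<in> Z" "Re w0 = Min (Re ` Z)"
    using Min_in[OF fin ne] unfolding image_iff by metis
  moreover obtain w1 where "w1 \<in> Z" "Re w1 = Max (Re ` Z)"
    using Max_in[OF fin ne] unfolding image_iff by metis
  ultimately show ?thesis
    using that[of w0 w1] fin by (simp add: Z_def)
qed

section \<open>Rational functions and their spans\<close>

lemma to_fract_prod: "to_fract (\<Prod>x\<in>A. f x) = (\<Prod>x\<in>A. to_fract (f x))"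
  by (induction A rule: infinite_finite_induct) auto

lemma to_fract_power: "to_fract (p ^ n) = to_fract p ^ n"
  by (induction n) auto

lemma cst_0 [simp]: "cst 0 = 0"
  by (simp add: cst_def)

lemma cst_1 [simp]: "cst 1 = 1"
  by (simp add: cst_def flip: one_pCons)

lemma cst_add: "cst (a + b) = cst a + cst b"
  by (simp add: cst_def flip: to_fract_add)

lemma cst_diff: "cst (a - b) = cst a - cst b"
  by (simp add: cst_def flip: to_fract_diff)

lemma cst_mult: "cst (a * b) = cst a * cst b"
  by (simp add: cst_def mult_pCons_left flip: to_fract_mult)

lemma to_fract_smult: "to_fract (smult a p) = cst a * to_fract p"
  by (simp add: cst_def mult_pCons_left flip: to_fract_mult)

lemma to_fract_pCons: "to_fract (pCons a p) = cst a + hvar * to_fract p"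
  by (simp add: cst_def hvar_def mult_pCons_left flip: to_fract_mult to_fract_add)

lemma fraction_eqI:
  fixes x y x' y' :: "'a::idom"
  assumes "y \<noteq> 0" "y' \<noteq> 0" "x * y' = x' * y"
  shows "to_fract x / to_fract y = to_fract x' / to_fract y'"
  using assms by (simp add: field_simps flip: to_fract_mult)

lemma hvar_minus_cst: "hvar - cst t = to_fract [:-t, 1:]"
  by (simp add: hvar_def cst_def flip: to_fract_diff)

lemma hvar_minus_cst_power: "(hvar - cst t) ^ k = to_fract ([:-t, 1:] ^ k)"
  by (simp add: hvar_minus_cst to_fract_power)

lemma hvar_shift_power: "(hvar - cst s + cst a) ^ k = to_fract ([:-(s - a), 1:] ^ k)"
proof -
  have "hvar - cst s + cst a = hvar - cst (s - a)"
    by (simp add: cst_diff)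
  then show ?thesis
    by (simp only: hvar_minus_cst_power)
qed

lemma ratfun_cases:
  obtains p q where "q \<noteq> 0" "x = to_fract p / to_fract q"
  by (cases x) (auto simp: Fract_conv_to_fract)

lemma shift_fraction:
  assumes "q \<noteq> 0"
  shows "shift a (to_fract p / to_fract q)
           = to_fract (p \<circ>\<^sub>p [:a, 1:]) / to_fract (q \<circ>\<^sub>p [:a, 1:])"
proof -
  have nz: "r \<circ>\<^sub>p [:a, 1:] \<noteq> 0" if "r \<noteq> 0" for r :: "complex poly"
    using that pcompose_eq_0[of r "[:a, 1:]"] by auto
  define pq where "pq = (SOME (p', q'). q' \<noteq> 0 \<and> to_fract p / to_fract q = Fract p' q')"
  obtain p' q' where pq': "pq = (p', q')"
    by (cases pq)
  have "\<exists>pq. (\<lambda>(p', q'). q' \<noteq> 0 \<and> to_fract p / to_fract q = Fract p' q') pq"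
    using assms by (intro exI[of _ "(p, q)"]) (simp add: Fract_conv_to_fract)
  from someI_ex[OF this] have q': "q' \<noteq> 0" and "Fract p q = Fract p' q'"
    unfolding pq_def[symmetric] pq' by (simp_all add: Fract_conv_to_fract)
  then have "p * q' = p' * q"
    using assms by (simp add: eq_fract)
  then have "(p' \<circ>\<^sub>p [:a, 1:]) * (q \<circ>\<^sub>p [:a, 1:]) = (p \<circ>\<^sub>p [:a, 1:]) * (q' \<circ>\<^sub>p [:a, 1:])"
    by (simp flip: pcompose_mult)
  then have "Fract (p' \<circ>\<^sub>p [:a, 1:]) (q' \<circ>\<^sub>p [:a, 1:]) = Fract (p \<circ>\<^sub>p [:a, 1:]) (q \<circ>\<^sub>p [:a, 1:])"
    using assms q' nz by (simp add: eq_fract)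
  then show ?thesis
    unfolding shift_def pq_def[symmetric] pq' by (simp add: Fract_conv_to_fract)
qed

lemma cspan_iff:
  "x \<in> cspan S \<longleftrightarrow> (\<exists>T c. finite T \<and> T \<subseteq> S \<and> x = (\<Sum>z\<in>T. cst (c z) * z))"
  unfolding cspan_def by blast

lemma cspan_superset: "x \<in> S \<Longrightarrow> x \<in> cspan S"
  unfolding cspan_iff by (intro exI[of _ "{x}"] exI[of _ "\<lambda>_. 1"]) simp

lemma cspan_zero: "0 \<in> cspan S"
  unfolding cspan_iff by (intro exI[of _ "{}"]) simp

lemma cspan_add:
  assumes "x \<in> cspan S" and "y \<in> cspan S"
  shows "x + y \<in> cspan S"
proof -
  obtain T1 c1 T2 c2 where T: "finite T1" "T1 \<subseteq> S" "finite T2" "T2 \<subseteq> S"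
    and x: "x = (\<Sum>z\<in>T1. cst (c1 z) * z)" and y: "y = (\<Sum>z\<in>T2. cst (c2 z) * z)"
    using assms unfolding cspan_iff by blast
  define c where "c z = (if z \<in> T1 then c1 z else 0) + (if z \<in> T2 then c2 z else 0)" for z
  have "(\<Sum>z\<in>T1 \<union> T2. cst (c z) * z)
      = (\<Sum>z\<in>T1 \<union> T2. if z \<in> T1 then cst (c1 z) * z else 0)
        + (\<Sum>z\<in>T1 \<union> T2. if z \<in> T2 then cst (c2 z) * z else 0)"
    unfolding sum.distrib[symmetric] by (rule sum.cong) (simp_all add: c_def cst_add distrib_right)
  also have "\<dots> = x + y"
    using T x y by (simp add: sum.If_cases Int_absorb1)
  finally show ?thesis
    unfolding cspan_iff using T by (intro exI[of _ "T1 \<union> T2"] exI[of _ c]) simp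
qed

lemma cspan_cst_mult:
  assumes "x \<in> cspan S"
  shows "cst a * x \<in> cspan S"
proof -
  obtain T c where T: "finite T" "T \<subseteq> S" and x: "x = (\<Sum>z\<in>T. cst (c z) * z)"
    using assms unfolding cspan_iff by blast
  have "cst a * x = (\<Sum>z\<in>T. cst (a * c z) * z)"
    by (simp add: x sum_distrib_left mult.assoc cst_mult)
  then show ?thesis
    unfolding cspan_iff using T by (intro exI[of _ T] exI[of _ "\<lambda>z. a * c z"]) simp
qed

lemma cspan_sum: "finite T \<Longrightarrow> (\<And>z. z \<in> T \<Longrightarrow> f z \<in> cspan S) \<Longrightarrow> (\<Sum>z\<in>T. f z) \<in> cspan S"
  by (induction T rule: finite_induct) (auto intro: cspan_zero cspan_add)

lemma cspan_minimal:
  assumes "0 \<in> M" and "\<And>x y. x \<in> M \<Longrightarrow> y \<in> M \<Longrightarrow> x + y \<in> M"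
    and "\<And>a x. x \<in> M \<Longrightarrow> cst a * x \<in> M" and "S \<subseteq> M"
  shows "cspan S \<subseteq> M"
proof
  fix x
  assume "x \<in> cspan S"
  then obtain T c where "finite T" "T \<subseteq> S" and x: "x = (\<Sum>z\<in>T. cst (c z) * z)"
    unfolding cspan_iff by blast
  from this(1,2) show "x \<in> M"
    unfolding x by (induction T rule: finite_induct) (use assms in auto)
qed

lemma cspan_mult_poly:
  assumes hvar_mult: "\<And>z. z \<in> S \<Longrightarrow> hvar * z \<in> cspan S" and x: "x \<in> cspan S"
  shows "to_fract p * x \<in> cspan S"
proof (induction p)
  case (pCons a p)
  have "hvar * y \<in> cspan S" if "y \<in> cspan S" for y
  proof -
    obtain T c where T: "finite T" "T \<subseteq> S" and y: "y = (\<Sum>z\<in>T. cst (c z) * z)"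
      using \<open>y \<in> cspan S\<close> unfolding cspan_iff by blast
    have "hvar * y = (\<Sum>z\<in>T. cst (c z) * (hvar * z))"
      by (simp add: y sum_distrib_left mult_ac)
    then show ?thesis
      using T hvar_mult by (auto intro: cspan_sum cspan_cst_mult)
  qed
  then show ?case
    using pCons.IH by (simp add: to_fract_pCons distrib_right mult.assoc cspan_add cspan_cst_mult x)
qed (simp add: cspan_zero)

definition poly_submodule :: "ratfun set \<Rightarrow> bool" where
  "poly_submodule M \<longleftrightarrow> (\<forall>x\<in>M. \<forall>y\<in>M. x + y \<in> M) \<and> (\<forall>p. \<forall>x\<in>M. to_fract p * x \<in> M)"

lemma poly_submodule_add: "poly_submodule M \<Longrightarrow> x \<in> M \<Longrightarrow> y \<in> M \<Longrightarrow> x + y \<in> M"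
  by (simp add: poly_submodule_def)

lemma poly_submodule_mult: "poly_submodule M \<Longrightarrow> x \<in> M \<Longrightarrow> to_fract p * x \<in> M"
  by (simp add: poly_submodule_def)

lemma poly_submodule_cst_mult: "poly_submodule M \<Longrightarrow> x \<in> M \<Longrightarrow> cst a * x \<in> M"
  using poly_submodule_mult[of M x "[:a:]"] by (simp add: cst_def)

lemma poly_submodule_diff:
  assumes "poly_submodule M" "x \<in> M" "y \<in> M"
  shows "x - y \<in> M"
  using poly_submodule_add[OF assms(1,2) poly_submodule_mult[OF assms(1,3), of "-1"]] by simp

lemma is_submodule_imp_poly_submodule:
  assumes "is_submodule \<theta> u M"
  shows "poly_submodule M"
  unfolding poly_submodule_def
proof (intro conjI ballI allI)
  show "x + y \<in> M" if "x \<in> M" "y \<in> M" for x y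
    using assms that by (simp add: is_submodule_def)
  show "to_fract p * x \<in> M" if "x \<in> M" for p x
  proof (induction p)
    case (pCons a p)
    then show ?case
      using assms that
      by (simp add: is_submodule_def act_h_def to_fract_pCons distrib_right mult.assoc)
  qed (use assms in \<open>simp add: is_submodule_def\<close>)
qed

lemma coprime_imp_bezout:
  fixes a b :: "'a::euclidean_ring_gcd"
  assumes "coprime a b"
  shows "\<exists>x y. x * a + y * b = 1"
  using bezout_coefficients_fst_snd[of a b] assms by (metis coprime_iff_gcd_eq_1)

lemma poly_submodule_inverse_coprime:
  assumes M: "poly_submodule M" "1 \<in> M"
    and x: "to_fract N / to_fract Q \<in> M" and "coprime N Q" and "Q \<noteq> 0"
  shows "inverse (to_fract Q) \<in> M"
proof -
  obtain a b where ab: "a * N + b * Q = 1"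
    using coprime_imp_bezout[OF \<open>coprime N Q\<close>] by blast
  have "to_fract a * (to_fract N / to_fract Q) + to_fract b * 1
      = to_fract (a * N + b * Q) / to_fract Q"
    using \<open>Q \<noteq> 0\<close> by (simp add: field_simps)
  also have "\<dots> = inverse (to_fract Q)"
    by (simp add: ab divide_inverse)
  finally show ?thesis
    by (metis M poly_submodule_add poly_submodule_mult x)
qed

lemma poly_submodule_inverse_linear_power:
  assumes M: "poly_submodule M" "1 \<in> M"
    and x: "to_fract N / to_fract D \<in> M" and "N \<noteq> 0" "D \<noteq> 0"
    and ord: "order w N + d \<le> order w D"
  shows "inverse (to_fract ([:-w, 1:] ^ d)) \<in> M"
proof -
  define L where "L = [:-w, 1 :: complex:]"
  obtain N' where N: "N = L ^ order w N * N'" and "\<not> L dvd N'"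
    using order_decomp[OF \<open>N \<noteq> 0\<close>] unfolding L_def by blast
  have "L ^ (order w N + d) dvd D"
    using ord order_1[of w D] unfolding L_def by (meson dvd_trans le_imp_power_dvd)
  then obtain D' where D: "D = L ^ (order w N + d) * D'"
    by blast
  have "D' \<noteq> 0"
    using D \<open>D \<noteq> 0\<close> by auto
  have "to_fract D' * (to_fract N / to_fract D) = to_fract N' / to_fract (L ^ d)"
    using \<open>D' \<noteq> 0\<close> by (subst N, subst D) (simp add: power_add field_simps L_def)
  then have frac: "to_fract N' / to_fract (L ^ d) \<in> M"
    by (metis M(1) poly_submodule_mult x)
  have "prime_elem L"
    unfolding L_def by (rule prime_elem_linear_field_poly) simp
  then have "coprime N' (L ^ d)"
    using \<open>\<not> L dvd N'\<close> by (simp add: prime_elem_imp_coprime coprime_commute)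
  from poly_submodule_inverse_coprime[OF M frac this] show ?thesis
    by (simp add: L_def)
qed

lemma poly_submodule_inverse_power_le:
  assumes "poly_submodule M" and "inverse (to_fract (L ^ n)) \<in> M" and "L \<noteq> 0" "k \<le> n"
  shows "inverse (to_fract (L ^ k)) \<in> M"
proof -
  have "to_fract (L ^ (n - k)) * inverse (to_fract (L ^ n)) = inverse (to_fract (L ^ k))"
    using \<open>L \<noteq> 0\<close> \<open>k \<le> n\<close> by (simp add: to_fract_power field_simps flip: power_add)
  then show ?thesis
    by (metis assms(1,2) poly_submodule_mult)
qed

lemma poly_submodule_inverse_mult_coprime:
  assumes M: "poly_submodule M"
    and "inverse (to_fract A) \<in> M" "inverse (to_fract B) \<in> M"
    and "coprime A B" "A \<noteq> 0" "B \<noteq> 0"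
  shows "inverse (to_fract (A * B)) \<in> M"
proof -
  obtain a b where ab: "a * A + b * B = 1"
    using coprime_imp_bezout[OF \<open>coprime A B\<close>] by blast
  have "inverse (to_fract (A * B)) = to_fract (a * A + b * B) / (to_fract A * to_fract B)"
    by (simp add: ab divide_inverse)
  also have "\<dots> = to_fract a * inverse (to_fract B) + to_fract b * inverse (to_fract A)"
    using \<open>A \<noteq> 0\<close> \<open>B \<noteq> 0\<close> by (simp add: field_simps)
  finally show ?thesis
    by (metis assms(1-3) poly_submodule_add poly_submodule_mult)
qed

lemma poly_submodule_poly_generator:
  assumes M: "poly_submodule M" and "x \<in> M" "x \<noteq> 0"
  obtains g where "g \<noteq> 0" "to_fract g \<in> M" "\<forall>q. to_fract q \<in> M \<longrightarrow> g dvd q"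
proof -
  obtain p q where "q \<noteq> 0" and x: "x = to_fract p / to_fract q"
    by (rule ratfun_cases)
  then have "to_fract p \<in> M" and "p \<noteq> 0"
    using poly_submodule_mult[OF M \<open>x \<in> M\<close>, of q] \<open>x \<noteq> 0\<close> by simp_all
  define G where "G g \<longleftrightarrow> g \<noteq> 0 \<and> to_fract g \<in> M" for g
  define g where "g = arg_min degree G"
  have "G g" and g_min: "\<And>h. G h \<Longrightarrow> degree g \<le> degree h"
    using arg_min_nat_lemma[of G p degree] \<open>to_fract p \<in> M\<close> \<open>p \<noteq> 0\<close>
    unfolding g_def G_def by auto
  then have "g \<noteq> 0" and "to_fract g \<in> M"
    by (simp_all add: G_def)
  moreover have "\<forall>q. to_fract q \<in> M \<longrightarrow> g dvd q"
  proof (intro allI impI)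
    fix q
    assume q: "to_fract q \<in> M"
    have "to_fract q = to_fract (q div g) * to_fract g + to_fract (q mod g)"
      by (subst div_mult_mod_eq[of q g, symmetric]) (simp only: to_fract_add to_fract_mult)
    then have "to_fract (q mod g) = to_fract q - to_fract (q div g) * to_fract g"
      by (simp add: algebra_simps)
    then have "to_fract (q mod g) \<in> M"
      using poly_submodule_diff[OF M q poly_submodule_mult[OF M \<open>to_fract g \<in> M\<close>]] by simp
    then have "q mod g = 0"
      using degree_mod_less[OF \<open>g \<noteq> 0\<close>, of q] g_min[of "q mod g"] by (force simp: G_def)
    then show "g dvd q"
      by (simp add: mod_eq_0_iff_dvd)
  qed
  ultimately show ?thesis
    by (rule that)
qed

section \<open>Rational functions with bounded poles\<close>

definition bounded_poles :: "(complex \<Rightarrow> nat) \<Rightarrow> ratfun set" where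
  "bounded_poles B = {to_fract p / to_fract (root_poly X) | p X. \<forall>w. count X w \<le> B w}"

lemma bounded_polesI:
  "(\<And>w. count X w \<le> B w) \<Longrightarrow> to_fract p / to_fract (root_poly X) \<in> bounded_poles B"
  unfolding bounded_poles_def by blast

lemma bounded_polesE:
  assumes "x \<in> bounded_poles B"
  obtains p X where "x = to_fract p / to_fract (root_poly X)" "\<forall>w. count X w \<le> B w"
  using assms unfolding bounded_poles_def by auto

lemma poly_in_bounded_poles: "to_fract p \<in> bounded_poles B"
  using bounded_polesI[of "{#}" B p] by simp

lemma bounded_poles_cancel:
  assumes "\<And>w. count D w \<le> B w + count A w"
  shows "to_fract (N * root_poly A) / to_fract (root_poly D) \<in> bounded_poles B"
  unfolding root_poly_cancel[of N A D] using assms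
  by (intro bounded_polesI) (simp add: le_diff_conv)

lemma bounded_poles_common_denominator:
  assumes "x \<in> bounded_poles B" "y \<in> bounded_poles B"
  obtains p q X where "x = to_fract p / to_fract (root_poly X)"
    "y = to_fract q / to_fract (root_poly X)" "\<forall>w. count X w \<le> B w"
proof -
  obtain p X where x: "x = to_fract p / to_fract (root_poly X)" and X: "\<forall>w. count X w \<le> B w"
    using assms(1) by (rule bounded_polesE)
  obtain q Y where y: "y = to_fract q / to_fract (root_poly Y)" and Y: "\<forall>w. count Y w \<le> B w"
    using assms(2) by (rule bounded_polesE)
  have "X \<union># Y = X + (Y - X)" and "X \<union># Y = Y + (X - Y)"
    by (simp_all add: multiset_eq_iff max_def)
  then have RX: "root_poly (X \<union># Y) = root_poly X * root_poly (Y - X)"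
    and RY: "root_poly (X \<union># Y) = root_poly Y * root_poly (X - Y)"
    by (metis root_poly_union)+
  have "x = to_fract (p * root_poly (Y - X)) / to_fract (root_poly (X \<union># Y))"
    by (simp add: x RX)
  moreover have "y = to_fract (q * root_poly (X - Y)) / to_fract (root_poly (X \<union># Y))"
    by (simp add: y RY)
  moreover have "\<forall>w. count (X \<union># Y) w \<le> B w"
    using X Y by simp
  ultimately show ?thesis
    by (rule that)
qed

lemma poly_submodule_bounded_poles: "poly_submodule (bounded_poles B)"
  unfolding poly_submodule_def
proof (intro conjI ballI allI)
  fix x y
  assume "x \<in> bounded_poles B" "y \<in> bounded_poles B"
  then obtain p q X where "x = to_fract p / to_fract (root_poly X)"
    "y = to_fract q / to_fract (root_poly X)" "\<forall>w. count X w \<le> B w"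
    by (rule bounded_poles_common_denominator)
  then show "x + y \<in> bounded_poles B"
    using bounded_polesI[of X B "p + q"] by (simp add: add_divide_distrib)
next
  fix p x
  assume "x \<in> bounded_poles B"
  then obtain q X where "x = to_fract q / to_fract (root_poly X)" "\<forall>w. count X w \<le> B w"
    by (rule bounded_polesE)
  then show "to_fract p * x \<in> bounded_poles B"
    using bounded_polesI[of X B "p * q"] by simp
qed

lemma coprime_linear_power_root_poly:
  fixes X :: "complex multiset"
  assumes "w \<notin># X"
  shows "coprime ([:-w, 1:] ^ k) (root_poly X)"
proof -
  have "\<not> [:-w, 1:] dvd root_poly X"
    using assms by (simp add: dvd_iff_poly_eq_0 poly_root_poly_eq_0_iff)
  moreover have "prime_elem [:-w, 1:]"
    by (rule prime_elem_linear_field_poly) simp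
  ultimately show ?thesis
    by (simp add: prime_elem_imp_coprime)
qed

lemma poly_submodule_inverse_root_poly:
  assumes M: "poly_submodule M" "1 \<in> M"
    and max: "\<And>w. inverse (to_fract ([:-w, 1:] ^ B w)) \<in> M"
    and "finite S" "set_mset X \<subseteq> S" "\<And>w. count X w \<le> B w"
  shows "inverse (to_fract (root_poly X)) \<in> M"
  using assms(4-6)
proof (induction S arbitrary: X rule: finite_induct)
  case (insert w S)
  define X' where "X' = filter_mset (\<lambda>z. z \<noteq> w) X"
  have "X = replicate_mset (count X w) w + X'"
    unfolding X'_def by (metis filter_eq_replicate_mset multiset_partition)
  then have X: "root_poly X = [:-w, 1:] ^ count X w * root_poly X'"
    by (metis root_poly_union root_poly_replicate_mset)
  have "inverse (to_fract ([:-w, 1:] ^ count X w)) \<in> M"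
    using poly_submodule_inverse_power_le[OF M(1) max] insert.prems(2) by simp
  moreover have "inverse (to_fract (root_poly X')) \<in> M"
  proof (rule insert.IH)
    show "set_mset X' \<subseteq> S"
      using insert.prems(1) by (auto simp: X'_def)
    show "count X' v \<le> B v" for v
      using insert.prems(2)[of v] by (simp add: X'_def)
  qed
  moreover have "coprime ([:-w, 1:] ^ count X w) (root_poly X')"
    by (rule coprime_linear_power_root_poly) (simp add: X'_def)
  ultimately show ?case
    unfolding X by (intro poly_submodule_inverse_mult_coprime[OF M(1)]) simp_all
qed (use M in simp)

lemma bounded_poles_subset:
  assumes M: "poly_submodule M" "1 \<in> M"
    and max: "\<And>w. inverse (to_fract ([:-w, 1:] ^ B w)) \<in> M"
  shows "bounded_poles B \<subseteq> M"
proof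
  fix x
  assume "x \<in> bounded_poles B"
  then obtain p X where x: "x = to_fract p / to_fract (root_poly X)" and X: "\<forall>w. count X w \<le> B w"
    by (rule bounded_polesE)
  have "inverse (to_fract (root_poly X)) \<in> M"
    using poly_submodule_inverse_root_poly[OF M max finite_set_mset[of X] subset_refl] X by simp
  then show "x \<in> M"
    unfolding x divide_inverse by (rule poly_submodule_mult[OF M(1)])
qed

lemma hvar_mult_inverse_linear_power:
  "hvar * inverse (to_fract ([:-w, 1:] ^ Suc j))
     = inverse (to_fract ([:-w, 1:] ^ j)) + cst w * inverse (to_fract ([:-w, 1:] ^ Suc j))"
proof -
  define L where "L = to_fract [:-w, 1 :: complex:]"
  have "L \<noteq> 0"
    by (simp add: L_def)
  have hvar: "hvar = L + cst w"
    unfolding L_def hvar_minus_cst[symmetric] by simp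
  have "hvar * inverse (L ^ Suc j) = L * inverse L * inverse (L ^ j) + cst w * inverse (L ^ Suc j)"
    unfolding hvar by (simp add: algebra_simps)
  then show ?thesis
    using \<open>L \<noteq> 0\<close> unfolding L_def to_fract_power by simp
qed

definition simple_fractions :: "(complex \<Rightarrow> nat) \<Rightarrow> ratfun set" where
  "simple_fractions B = {inverse (to_fract ([:-w, 1:] ^ k)) | w k. 1 \<le> k \<and> k \<le> B w}"

lemma poly_submodule_cspan_simple_fractions:
  "poly_submodule (cspan ({to_fract p | p. True} \<union> simple_fractions B))"
  (is "poly_submodule (cspan ?S)")
proof -
  have one: "1 \<in> cspan ?S"
    by (intro cspan_superset UnI1 CollectI exI[of _ 1]) simp
  have "hvar * z \<in> cspan ?S" if "z \<in> ?S" for z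
    using that[unfolded simple_fractions_def]
  proof (elim UnE CollectE exE conjE)
    fix p
    assume "z = to_fract p"
    then have "hvar * z = to_fract (pCons 0 p)"
      by (simp add: to_fract_pCons)
    then show ?thesis
      by (simp add: cspan_superset)
  next
    fix w k
    assume z: "z = inverse (to_fract ([:-w, 1:] ^ k))" and k: "1 \<le> k" "k \<le> B w"
    then obtain j where j: "k = Suc j"
      by (cases k) auto
    have "inverse (to_fract ([:-w, 1:] ^ j)) \<in> cspan ?S"
    proof (cases "j = 0")
      case True
      then show ?thesis
        using one by simp
    next
      case False
      then show ?thesis
        using k unfolding j simple_fractions_def
        by (intro cspan_superset UnI2 CollectI exI[of _ w] exI[of _ j]) auto
    qed
    moreover have "cst w * z \<in> cspan ?S"
      using that by (intro cspan_cst_mult cspan_superset)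
    moreover have "hvar * z = inverse (to_fract ([:-w, 1:] ^ j)) + cst w * z"
      unfolding z j by (rule hvar_mult_inverse_linear_power)
    ultimately show ?thesis
      by (simp add: cspan_add)
  qed
  then show ?thesis
    unfolding poly_submodule_def by (intro conjI ballI allI cspan_add cspan_mult_poly)
qed

lemma bounded_poles_eq_cspan:
  "bounded_poles B = cspan ({to_fract p | p. True} \<union> simple_fractions B)"
  (is "_ = cspan ?S")
proof
  have "1 \<in> cspan ?S"
    by (intro cspan_superset UnI1 CollectI exI[of _ 1]) simp
  moreover have "inverse (to_fract ([:-w, 1:] ^ B w)) \<in> cspan ?S" for w
  proof (cases "B w = 0")
    case True
    then show ?thesis
      using \<open>1 \<in> cspan ?S\<close> by simp
  next
    case False
    then show ?thesis
      unfolding simple_fractions_def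
      by (intro cspan_superset UnI2 CollectI exI[of _ w] exI[of _ "B w"]) simp
  qed
  ultimately show "bounded_poles B \<subseteq> cspan ?S"
    using poly_submodule_cspan_simple_fractions by (intro bounded_poles_subset)
next
  have "?S \<subseteq> bounded_poles B"
    using poly_in_bounded_poles bounded_polesI[of "replicate_mset _ _" B 1]
    by (auto simp: simple_fractions_def root_poly_replicate_mset divide_inverse)
  then show "cspan ?S \<subseteq> bounded_poles B"
    using poly_submodule_bounded_poles poly_in_bounded_poles[of 0]
    by (intro cspan_minimal) (simp_all add: poly_submodule_add poly_submodule_cst_mult)
qed

section \<open>The module N_u\<close>

lemma L_u_eqI:
  assumes S: "is_submodule \<theta> u S" "S \<noteq> {0}"
    and least: "\<And>M. is_submodule \<theta> u M \<Longrightarrow> M \<noteq> {0} \<Longrightarrow> S \<subseteq> M"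
  shows "L_u \<theta> u = S"
  unfolding L_u_def
proof (rule the_equality)
  show "is_simple_submodule \<theta> u S"
    unfolding is_simple_submodule_def
  proof (intro conjI allI impI S)
    fix M
    assume "is_submodule \<theta> u M \<and> M \<subseteq> S"
    then show "M = {0} \<or> M = S"
      using least[of M] by auto
  qed
next
  fix M
  assume "is_simple_submodule \<theta> u M"
  then have "S = {0} \<or> S = M"
    using S(1) least[of M] unfolding is_simple_submodule_def by auto
  then show "M = S"
    using S(2) by auto
qed

locale Lu_setting =
  fixes \<theta> r1 r2 c :: complex and m :: "complex \<Rightarrow> int" and \<omega> :: real
    and C\<omega> :: "complex set" and u :: ratfun
  assumes roots: "[:\<theta> - 1, -2, -1:] = - ([:-r1, 1:] * [:-r2, 1:])"
    and omega: "\<omega> = 3 + max (Re r1) (Re r2)"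
    and Comega: "C\<omega> = {z. \<omega> \<le> Re z \<and> Re z < \<omega> + 2}"
    and c_nz: "c \<noteq> 0"
    and m_fin: "finite {t. m t \<noteq> 0}"
    and m_supp: "\<forall>t. m t \<noteq> 0 \<longrightarrow> t \<in> C\<omega>"
    and u_def: "u = cst c * (\<Prod>t\<in>{t. m t \<noteq> 0}. (hvar - cst t) powi (m t))"
begin

definition u_zeros :: "complex multiset" where
  "u_zeros = (\<Sum>t\<in>{t. m t \<noteq> 0}. replicate_mset (nat (m t)) t)"

definition u_poles :: "complex multiset" where
  "u_poles = (\<Sum>t\<in>{t. m t \<noteq> 0}. replicate_mset (nat (- m t)) t)"

lemma count_u_zeros: "count u_zeros w = nat (m w)"
  using m_fin by (simp add: u_zeros_def count_sum)

lemma count_u_poles: "count u_poles w = nat (- m w)"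
  using m_fin by (simp add: u_poles_def count_sum)

lemma u_fraction: "u = to_fract (smult c (root_poly u_zeros)) / to_fract (root_poly u_poles)"
proof -
  have "(hvar - cst t) powi (m t)
        = to_fract (root_poly (replicate_mset (nat (m t)) t))
          / to_fract (root_poly (replicate_mset (nat (- m t)) t))" for t
    by (simp add: hvar_minus_cst root_poly_replicate_mset to_fract_power power_int_def
        power_inverse divide_inverse)
  then show ?thesis
    unfolding u_def u_zeros_def u_poles_def root_poly_sum
    by (simp add: to_fract_smult to_fract_prod prod_dividef)
qed

lemma act_e_fraction:
  "act_e u (to_fract p / to_fract (root_poly X))
     = to_fract (smult c (p \<circ>\<^sub>p [:-2, 1:]) * root_poly u_zeros)
       / to_fract (root_poly (translate_mset 2 X + u_poles))"
  using pcompose_root_poly[of X 2]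
  by (simp add: act_e_def sigma_def shift_fraction u_fraction to_fract_smult)

lemma f_coefficient_root_poly:
  "(cst \<theta> - (hvar + 1)^2) / cst 4 = to_fract (smult (- 1 / 4) (root_poly {#r1, r2#}))"
proof -
  have "hvar + 1 = to_fract [:1, 1:]"
    using to_fract_pCons[of 1 "[:1:]"] by (simp add: pCons_one add.commute)
  then have "cst \<theta> - (hvar + 1)^2 = to_fract ([:\<theta>:] - [:1, 1:]^2)"
    by (simp add: cst_def to_fract_power)
  also have "[:\<theta>:] - [:1, 1:]^2 = [:\<theta> - 1, -2, -1:]"
    by (simp add: power2_eq_square mult_pCons_left)
  also have "\<dots> = - root_poly {#r1, r2#}"
    unfolding roots by (simp del: mult_pCons_left)
  finally have "(cst \<theta> - (hvar + 1)^2) / cst 4 = to_fract (- root_poly {#r1, r2#}) / to_fract [:4:]"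
    by (simp add: cst_def)
  also have "\<dots> = to_fract (smult (- 1 / 4) (root_poly {#r1, r2#})) / to_fract 1"
    by (rule fraction_eqI) (simp_all add: mult_pCons_right)
  finally show ?thesis
    by simp
qed

lemma act_f_fraction:
  "act_f \<theta> u (to_fract p / to_fract (root_poly X))
     = to_fract (smult (- 1 / (4 * c)) (p \<circ>\<^sub>p [:2, 1:])
                 * root_poly ({#r1, r2#} + translate_mset (-2) u_poles))
       / to_fract (root_poly (translate_mset (-2) (X + u_zeros)))"
proof -
  have pc: "root_poly Y \<circ>\<^sub>p [:2, 1:] = root_poly (translate_mset (-2) Y)"
    for Y :: "complex multiset"
    using pcompose_root_poly[of Y "-2"] by simp
  have "act_f \<theta> u (to_fract p / to_fract (root_poly X))
      = to_fract (smult (- 1 / 4) (root_poly {#r1, r2#}))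
        * ((to_fract (p \<circ>\<^sub>p [:2, 1:]) / to_fract (root_poly (translate_mset (-2) X)))
           / (to_fract (smult c (root_poly (translate_mset (-2) u_zeros)))
              / to_fract (root_poly (translate_mset (-2) u_poles))))"
    unfolding act_f_def sigma_inv_def f_coefficient_root_poly u_fraction
    by (simp add: shift_fraction pcompose_smult pc)
  also have "\<dots> = to_fract (smult (- 1 / 4) (root_poly {#r1, r2#}) * (p \<circ>\<^sub>p [:2, 1:])
        * root_poly (translate_mset (-2) u_poles))
      / to_fract (root_poly (translate_mset (-2) X)
                  * smult c (root_poly (translate_mset (-2) u_zeros)))"
    by (simp only: divide_divide_times_eq times_divide_eq_right to_fract_mult mult.assoc)
  also have "\<dots> = to_fract (smult (- 1 / (4 * c)) (p \<circ>\<^sub>p [:2, 1:])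
                 * root_poly ({#r1, r2#} + translate_mset (-2) u_poles))
       / to_fract (root_poly (translate_mset (-2) (X + u_zeros)))"
    unfolding root_poly_union[of "{#r1, r2#}"]
    using c_nz by (intro fraction_eqI) (simp_all del: root_poly_add_mset add: mult_ac)
  finally show ?thesis .
qed

lemma roots_Re_le: "Re r1 \<le> \<omega> - 3" "Re r2 \<le> \<omega> - 3"
  using omega by auto

definition strip_index :: "complex \<Rightarrow> int" where
  "strip_index w = \<lfloor>(Re w - \<omega>) / 2\<rfloor>"

definition strip_base :: "complex \<Rightarrow> complex" where
  "strip_base w = w - 2 * of_int (strip_index w)"

lemma strip_base_in: "strip_base w \<in> C\<omega>"
proof -
  define t where "t = (Re w - \<omega>) / 2"
  have "of_int \<lfloor>t\<rfloor> \<le> t" "t < of_int \<lfloor>t\<rfloor> + 1"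
    by linarith+
  then show ?thesis
    unfolding Comega strip_base_def strip_index_def t_def[symmetric]
    by (simp add: t_def field_simps)
qed

lemma strip_base_index:
  assumes "s \<in> C\<omega>"
  shows "strip_index (s + 2 * of_int n) = n" "strip_base (s + 2 * of_int n) = s"
proof -
  have "\<lfloor>(Re s + 2 * of_int n - \<omega>) / 2\<rfloor> = n"
    using assms by (intro floor_unique) (simp_all add: Comega field_simps)
  then show "strip_index (s + 2 * of_int n) = n"
    by (simp add: strip_index_def)
  then show "strip_base (s + 2 * of_int n) = s"
    by (simp add: strip_base_def)
qed

lemma strip_cases:
  obtains s n where "s \<in> C\<omega>" "w = s + 2 * of_int n"
  using strip_base_in by (metis diff_add_cancel strip_base_def)

lemma m_strip:
  assumes "s \<in> C\<omega>"
  shows "m (s + 2 * of_int n) = (if n = 0 then m s else 0)"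
  using assms m_supp strip_base_index[of s n] strip_base_index[of "s + 2 * of_int n" 0] by force

definition root_count :: "complex \<Rightarrow> nat \<Rightarrow> int" where
  "root_count s i = (if r1 \<in> {s - 2 * of_nat l | l. 2 \<le> l \<and> l \<le> i} then 1 else 0)
                  + (if r2 \<in> {s - 2 * of_nat l | l. 2 \<le> l \<and> l \<le> i} then 1 else 0)"

lemma root_count_le_1: "i \<le> 1 \<Longrightarrow> root_count s i = 0"
  by (auto simp: root_count_def)

lemma root_count_mono: "i \<le> j \<Longrightarrow> root_count s i \<le> root_count s j"
  unfolding root_count_def by (auto split: if_splits)

lemma root_count_Suc:
  assumes "1 \<le> i"
  shows "root_count s (Suc i) = root_count s i + int (count {#r1, r2#} (s - 2 * of_nat (Suc i)))"
proof -
  define S where "S j = {s - 2 * of_nat l | l. 2 \<le> l \<and> l \<le> j}" for j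
  have "S (Suc i) = insert (s - 2 * of_nat (Suc i)) (S i)"
  proof
    show "S (Suc i) \<subseteq> insert (s - 2 * of_nat (Suc i)) (S i)"
      unfolding S_def by (auto simp: le_Suc_eq)
    have "s - 2 * of_nat (Suc i) \<in> S (Suc i)"
      using assms unfolding S_def by (intro CollectI exI[of _ "Suc i"]) simp
    moreover have "S i \<subseteq> S (Suc i)"
      unfolding S_def by force
    ultimately show "insert (s - 2 * of_nat (Suc i)) (S i) \<subseteq> S (Suc i)"
      by simp
  qed
  moreover have "s - 2 * of_nat (Suc i) \<notin> S i"
    unfolding S_def by (auto simp del: of_nat_Suc)
  ultimately show ?thesis
    unfolding root_count_def S_def[symmetric] by auto
qed

(* The largest k such that 1/(h - w)^k is among the generators (ii), (iii); see generators_eq. *)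
definition pole_bound :: "complex \<Rightarrow> nat" where
  "pole_bound w =
     (let s = strip_base w; n = strip_index w in
      if m s < 0 \<and> 0 \<le> n then nat (- m s)
      else if 0 < m s \<and> n < 0 then nat (m s - root_count s (nat (- n)))
      else 0)"

lemma pole_bound_strip:
  assumes "s \<in> C\<omega>"
  shows "pole_bound (s + 2 * of_int n) =
           (if m s < 0 \<and> 0 \<le> n then nat (- m s)
            else if 0 < m s \<and> n < 0 then nat (m s - root_count s (nat (- n)))
            else 0)"
  using strip_base_index[OF assms] by (simp add: pole_bound_def)

lemma pole_bound_right: "s \<in> C\<omega> \<Longrightarrow> m s < 0 \<Longrightarrow> pole_bound (s + 2 * of_nat i) = nat (- m s)"
  using pole_bound_strip[of s "int i"] by simp

lemma pole_bound_left:
  "s \<in> C\<omega> \<Longrightarrow> 0 < m s \<Longrightarrow> 1 \<le> i \<Longrightarrow> pole_bound (s - 2 * of_nat i) = nat (m s - root_count s i)"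
  using pole_bound_strip[of s "- int i"] by simp

lemma pole_bound_e_step: "int (pole_bound (w - 2)) - m w \<le> int (pole_bound w)"
proof -
  obtain s n where s: "s \<in> C\<omega>" and w: "w = s + 2 * of_int n"
    by (rule strip_cases)
  have "w - 2 = s + 2 * of_int (n - 1)"
    by (simp add: w algebra_simps)
  note bounds = pole_bound_strip[OF s, of n, folded w]
    pole_bound_strip[OF s, of "n - 1", folded this]
    and m_w = m_strip[OF s, of n, folded w]
  have mono: "root_count s (nat (- n)) \<le> root_count s (nat (- (n - 1)))"
    by (rule root_count_mono) simp
  have "root_count s (nat (- (n - 1))) = 0" if "n = 0"
    using that by (simp add: root_count_le_1)
  then show ?thesis
    unfolding bounds m_w using mono
    by (cases "m s < 0"; cases "0 < m s"; cases "n = 0"; cases "n < 0") auto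
qed

lemma pole_bound_f_step:
  "int (pole_bound (w + 2)) + m (w + 2) - int (count {#r1, r2#} w) \<le> int (pole_bound w)"
proof -
  obtain s n where s: "s \<in> C\<omega>" and w: "w = s + 2 * of_int n"
    by (rule strip_cases)
  have "w + 2 = s + 2 * of_int (n + 1)"
    by (simp add: w algebra_simps)
  note bounds = pole_bound_strip[OF s, of n, folded w]
    pole_bound_strip[OF s, of "n + 1", folded this]
    and m_w2 = m_strip[OF s, of "n + 1", folded this]
  have "root_count s (nat (- n)) = root_count s (nat (- (n + 1))) + int (count {#r1, r2#} w)"
    if "n \<le> -2"
  proof -
    have "nat (- n) = Suc (nat (- (n + 1)))" and "1 \<le> nat (- (n + 1))"
      using that by simp_all
    moreover have "w = s - 2 * of_nat (nat (- n))"
      using that by (simp add: w)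
    ultimately show ?thesis
      using root_count_Suc[of "nat (- (n + 1))" s] by simp
  qed
  moreover have "root_count s (nat (- n)) = 0" if "n = -1"
    using that by (simp add: root_count_le_1)
  ultimately show ?thesis
    unfolding bounds m_w2
    by (cases "m s < 0"; cases "0 < m s"; cases "n < -1"; cases "n = -1"; cases "n < 0") auto
qed

lemma is_submodule_bounded_poles: "is_submodule \<theta> u (bounded_poles pole_bound)"
  unfolding is_submodule_def act_h_def
proof (intro conjI ballI allI)
  show "0 \<in> bounded_poles pole_bound"
    using poly_in_bounded_poles[of 0] by simp
  fix x
  assume x: "x \<in> bounded_poles pole_bound"
  then obtain p X where x_eq: "x = to_fract p / to_fract (root_poly X)"
    and X: "\<forall>w. count X w \<le> pole_bound w"
    by (rule bounded_polesE)
  show "act_e u x \<in> bounded_poles pole_bound"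
    unfolding x_eq act_e_fraction
  proof (rule bounded_poles_cancel)
    show "count (translate_mset 2 X + u_poles) w \<le> pole_bound w + count u_zeros w" for w
      using X[rule_format, of "w - 2"] pole_bound_e_step[of w]
      by (simp add: count_u_zeros count_u_poles)
  qed
  show "act_f \<theta> u x \<in> bounded_poles pole_bound"
    unfolding x_eq act_f_fraction
  proof (rule bounded_poles_cancel)
    show "count (translate_mset (-2) (X + u_zeros)) w
            \<le> pole_bound w + count ({#r1, r2#} + translate_mset (-2) u_poles) w" for w
      using X[rule_format, of "w + 2"] pole_bound_f_step[of w]
      unfolding count_union count_translate_mset diff_minus_eq_add count_u_zeros count_u_poles
      by linarith
  qed
  show "hvar * x \<in> bounded_poles pole_bound" "cst a * x \<in> bounded_poles pole_bound" for a
    using x poly_submodule_bounded_poles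
    by (simp_all add: poly_submodule_cst_mult
        poly_submodule_mult[of _ x "[:0, 1:]", folded hvar_def])
next
  show "x + y \<in> bounded_poles pole_bound"
    if "x \<in> bounded_poles pole_bound" "y \<in> bounded_poles pole_bound" for x y
    using poly_submodule_bounded_poles that by (rule poly_submodule_add)
qed

lemma submodule_act_e_poly:
  assumes "is_submodule \<theta> u M" "to_fract g \<in> M"
  shows "to_fract (smult c (g \<circ>\<^sub>p [:-2, 1:]) * root_poly u_zeros) \<in> M"
proof -
  have "act_e u (to_fract g) \<in> M"
    using assms by (simp add: is_submodule_def)
  then have "to_fract (root_poly u_poles) * act_e u (to_fract g) \<in> M"
    using is_submodule_imp_poly_submodule[OF assms(1)] by (rule poly_submodule_mult[rotated])
  then show ?thesis
    using act_e_fraction[of g "{#}"] by (simp add: translate_mset_def)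
qed

lemma submodule_act_f_poly:
  assumes "is_submodule \<theta> u M" "to_fract g \<in> M"
  shows "to_fract (smult (- 1 / (4 * c)) (g \<circ>\<^sub>p [:2, 1:])
           * root_poly ({#r1, r2#} + translate_mset (-2) u_poles)) \<in> M"
proof -
  have "act_f \<theta> u (to_fract g) \<in> M"
    using assms by (simp add: is_submodule_def)
  then have "to_fract (root_poly (translate_mset (-2) u_zeros)) * act_f \<theta> u (to_fract g) \<in> M"
    using is_submodule_imp_poly_submodule[OF assms(1)] by (rule poly_submodule_mult[rotated])
  then show ?thesis
    using act_f_fraction[of g "{#}"] by simp
qed

lemma generator_leftmost_root:
  assumes M: "is_submodule \<theta> u M" "to_fract g \<in> M" and dvd: "\<forall>q. to_fract q \<in> M \<longrightarrow> g dvd q"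
    and "poly g w = 0" "poly g (w - 2) \<noteq> 0"
  shows "\<omega> \<le> Re w"
proof -
  have "poly (smult c (g \<circ>\<^sub>p [:-2, 1:]) * root_poly u_zeros) w = 0"
    using dvd submodule_act_e_poly[OF M] \<open>poly g w = 0\<close> by (metis dvdE mult_zero_left poly_mult)
  then have "w \<in># u_zeros"
    using assms(5) c_nz by (simp add: poly_pcompose poly_root_poly_eq_0_iff)
  then have "m w \<noteq> 0"
    by (simp add: count_u_zeros flip: count_greater_zero_iff)
  then show ?thesis
    using m_supp Comega by auto
qed

lemma generator_rightmost_root:
  assumes M: "is_submodule \<theta> u M" "to_fract g \<in> M" and dvd: "\<forall>q. to_fract q \<in> M \<longrightarrow> g dvd q"
    and "poly g w = 0" "poly g (w + 2) \<noteq> 0"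
  shows "Re w < \<omega>"
proof -
  have "poly (smult (- 1 / (4 * c)) (g \<circ>\<^sub>p [:2, 1:])
           * root_poly ({#r1, r2#} + translate_mset (-2) u_poles)) w = 0"
    using dvd submodule_act_f_poly[OF M] \<open>poly g w = 0\<close> by (metis dvdE mult_zero_left poly_mult)
  then have "w \<in># {#r1, r2#} + translate_mset (-2) u_poles"
    using assms(5) c_nz
    by (auto simp: poly_pcompose poly_root_poly_eq_0_iff add.commute simp del: root_poly_union)
  then have "w = r1 \<or> w = r2 \<or> m (w + 2) < 0"
    by (auto simp: count_u_poles simp flip: count_greater_zero_iff)
  then show ?thesis
  proof (elim disjE)
    assume "m (w + 2) < 0"
    then have "w + 2 \<in> C\<omega>"
      using m_supp by auto
    then show ?thesis
      by (simp add: Comega)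
  qed (use roots_Re_le in auto)
qed

lemma submodule_one_mem:
  assumes M: "is_submodule \<theta> u M" and "x \<in> M" "x \<noteq> 0"
  shows "1 \<in> M"
proof -
  obtain g where "g \<noteq> 0" "to_fract g \<in> M" and dvd: "\<forall>q. to_fract q \<in> M \<longrightarrow> g dvd q"
    using is_submodule_imp_poly_submodule[OF M] assms(2,3) by (rule poly_submodule_poly_generator)
  have "degree g = 0"
  proof (rule ccontr)
    assume "degree g \<noteq> 0"
    then obtain w0 w1 where "poly g w0 = 0" "poly g w1 = 0"
      and extremal: "\<forall>z. poly g z = 0 \<longrightarrow> Re w0 \<le> Re z \<and> Re z \<le> Re w1"
      by (rule poly_roots_extremal_Re[OF \<open>g \<noteq> 0\<close>])
    have "poly g (w0 - 2) \<noteq> 0" "poly g (w1 + 2) \<noteq> 0"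
      using extremal by force+
    then have "\<omega> \<le> Re w0" "Re w1 < \<omega>"
      using generator_leftmost_root[OF M \<open>to_fract g \<in> M\<close> dvd \<open>poly g w0 = 0\<close>]
        generator_rightmost_root[OF M \<open>to_fract g \<in> M\<close> dvd \<open>poly g w1 = 0\<close>] by simp_all
    then show False
      using extremal \<open>poly g w0 = 0\<close> by force
  qed
  then obtain a where "to_fract g = cst a" "a \<noteq> 0"
    using \<open>g \<noteq> 0\<close> by (metis cst_def degree_eq_zeroE pCons_0_0)
  then have "cst (inverse a) * to_fract g = 1"
    by (simp flip: cst_mult)
  then show ?thesis
    using poly_submodule_cst_mult[OF is_submodule_imp_poly_submodule[OF M] \<open>to_fract g \<in> M\<close>]
    by metis
qed

lemma submodule_e_step:
  assumes M: "is_submodule \<theta> u M" "1 \<in> M" and d: "inverse (to_fract ([:-w, 1:] ^ d)) \<in> M"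
  shows "inverse (to_fract ([:-(w + 2), 1:] ^ nat (int d - m (w + 2)))) \<in> M"
proof (cases "int d - m (w + 2) \<le> 0")
  case True
  then show ?thesis
    using M(2) by simp
next
  case False
  note PM = is_submodule_imp_poly_submodule[OF M(1)]
  have "act_e u (to_fract 1 / to_fract (root_poly (replicate_mset d w))) \<in> M"
    using M d by (simp add: is_submodule_def root_poly_replicate_mset divide_inverse)
  then have frac: "to_fract (smult c 1 * root_poly u_zeros)
               / to_fract (root_poly (translate_mset 2 (replicate_mset d w) + u_poles)) \<in> M"
    by (simp only: act_e_fraction pcompose_1)
  have num: "order (w + 2) (smult c 1 * root_poly u_zeros) = nat (m (w + 2))"
    using c_nz by (simp add: order_smult order_root_poly count_u_zeros)
  have den: "order (w + 2) (root_poly (translate_mset 2 (replicate_mset d w) + u_poles))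
      = d + nat (- m (w + 2))"
    by (simp add: order_root_poly count_u_poles del: root_poly_union)
  show ?thesis
    by (rule poly_submodule_inverse_linear_power[OF PM M(2) frac])
      (use c_nz False num den in simp_all)
qed

lemma submodule_f_step:
  assumes M: "is_submodule \<theta> u M" "1 \<in> M" and d: "inverse (to_fract ([:-w, 1:] ^ d)) \<in> M"
  shows "inverse (to_fract ([:-(w - 2), 1:] ^ nat (int d + m w - count {#r1, r2#} (w - 2)))) \<in> M"
proof (cases "int d + m w - count {#r1, r2#} (w - 2) \<le> 0")
  case True
  then show ?thesis
    using M(2) by simp
next
  case False
  note PM = is_submodule_imp_poly_submodule[OF M(1)]
  have "act_f \<theta> u (to_fract 1 / to_fract (root_poly (replicate_mset d w))) \<in> M"
    using M d by (simp add: is_submodule_def root_poly_replicate_mset divide_inverse)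
  then have frac: "to_fract (smult (- 1 / (4 * c)) 1
                            * root_poly ({#r1, r2#} + translate_mset (-2) u_poles))
               / to_fract (root_poly (translate_mset (-2) (replicate_mset d w + u_zeros))) \<in> M"
    by (simp only: act_f_fraction pcompose_1)
  have "order (w - 2)
          (smult (- 1 / (4 * c)) 1 * root_poly ({#r1, r2#} + translate_mset (-2) u_poles))
      = order (w - 2) (root_poly ({#r1, r2#} + translate_mset (-2) u_poles))"
    using c_nz by (simp only: mult_smult_left mult_1_left) (rule order_smult, simp)
  also have "\<dots> = count {#r1, r2#} (w - 2) + nat (- m w)"
    by (simp only: order_root_poly count_union count_translate_mset count_u_poles) simp
  finally have num: "order (w - 2) (smult (- 1 / (4 * c)) 1
      * root_poly ({#r1, r2#} + translate_mset (-2) u_poles))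
      = count {#r1, r2#} (w - 2) + nat (- m w)" .
  have den: "order (w - 2) (root_poly (translate_mset (-2) (replicate_mset d w + u_zeros)))
      = d + nat (m w)"
    by (simp add: order_root_poly count_u_zeros del: root_poly_union)
  show ?thesis
    by (rule poly_submodule_inverse_linear_power[OF PM M(2) frac])
      (use c_nz False num den in \<open>simp_all del: root_poly_union root_poly_add_mset\<close>)
qed

lemma submodule_inverse_power_right_of_pole:
  assumes M: "is_submodule \<theta> u M" "1 \<in> M" and s: "s \<in> C\<omega>" "m s < 0"
  shows "inverse (to_fract ([:-(s + 2 * of_nat i), 1:] ^ nat (- m s))) \<in> M"
proof (induction i)
  case 0
  show ?case
    using submodule_e_step[OF M, of "s - 2" 0] M(2) by simp
next
  case (Suc i)
  have "m (s + 2 * of_nat i + 2) = 0"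
    using m_strip[OF s(1), of "int i + 1"] by (simp add: algebra_simps)
  then show ?case
    using submodule_e_step[OF M Suc.IH] s(2) by (simp add: algebra_simps)
qed

lemma submodule_inverse_power_left_of_zero:
  assumes M: "is_submodule \<theta> u M" "1 \<in> M" and s: "s \<in> C\<omega>" and "1 \<le> j"
  shows "inverse (to_fract ([:-(s - 2 * of_nat j), 1:] ^ nat (m s - root_count s j))) \<in> M"
  using \<open>1 \<le> j\<close>
proof (induction j rule: nat_induct_at_least)
  case base
  have "count {#r1, r2#} (s - 2) = 0"
    using roots_Re_le s by (auto simp: Comega)
  then show ?case
    using submodule_f_step[OF M, of s 0] M(2) by (simp add: root_count_le_1)
next
  case (Suc j)
  define v where "v = s - 2 * of_nat (Suc j)"
  have v: "s - 2 * of_nat j - 2 = v"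
    by (simp add: v_def algebra_simps)
  have "m (s - 2 * of_nat j) = 0"
    using m_strip[OF s, of "- int j"] Suc.hyps by simp
  then have "nat (int (nat (m s - root_count s j)) + m (s - 2 * of_nat j)
                  - int (count {#r1, r2#} v))
      = nat (m s - root_count s (Suc j))"
    unfolding root_count_Suc[OF Suc.hyps, of s, folded v_def]
    by (cases "0 \<le> m s - root_count s j") simp_all
  then show ?case
    using submodule_f_step[OF M Suc.IH] unfolding v v_def by simp
qed

lemma submodule_inverse_pole_bound:
  assumes M: "is_submodule \<theta> u M" "1 \<in> M"
  shows "inverse (to_fract ([:-w, 1:] ^ pole_bound w)) \<in> M"
proof -
  obtain s n where s: "s \<in> C\<omega>" and w: "w = s + 2 * of_int n"
    by (rule strip_cases)
  consider "m s < 0" "0 \<le> n" | "0 < m s" "n < 0" | "pole_bound w = 0"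
    using pole_bound_strip[OF s, of n, folded w] by (auto split: if_splits)
  then show ?thesis
  proof cases
    case 1
    then have "w = s + 2 * of_nat (nat n)"
      by (simp add: w)
    then show ?thesis
      using submodule_inverse_power_right_of_pole[OF M s 1(1)] pole_bound_right[OF s 1(1)] by simp
  next
    case 2
    then have "w = s - 2 * of_nat (nat (- n))"
      by (simp add: w)
    then show ?thesis
      using submodule_inverse_power_left_of_zero[OF M s, of "nat (- n)"]
        pole_bound_left[OF s 2(1), of "nat (- n)"] 2(2) by simp
  qed (use M(2) in simp)
qed

lemma bounded_poles_subset_submodule:
  assumes M: "is_submodule \<theta> u M" and "M \<noteq> {0}"
  shows "bounded_poles pole_bound \<subseteq> M"
proof -
  obtain x where "x \<in> M" "x \<noteq> 0"
    using assms unfolding is_submodule_def by blast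
  then have "1 \<in> M"
    by (rule submodule_one_mem[OF M])
  then show ?thesis
    using is_submodule_imp_poly_submodule[OF M] submodule_inverse_pole_bound[OF M]
    by (intro bounded_poles_subset)
qed

lemma L_u_eq_bounded_poles: "L_u \<theta> u = bounded_poles pole_bound"
proof (rule L_u_eqI[OF is_submodule_bounded_poles _ bounded_poles_subset_submodule])
  show "bounded_poles pole_bound \<noteq> {0}"
    using poly_in_bounded_poles[of 1 pole_bound] by auto
qed

definition right_generators :: "ratfun set" where
  "right_generators = {inverse ((hvar - cst (s + 2 * of_nat i)) ^ k) | s i k.
     s \<in> C\<omega> \<and> m s < 0 \<and> 1 \<le> k \<and> int k \<le> - m s}"

definition left_generators :: "ratfun set" where
  "left_generators = {inverse ((hvar - cst s + cst (2 * of_nat i)) ^ k) | s i k.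
     s \<in> C\<omega> \<and> m s > 0 \<and> 1 \<le> i \<and> 1 \<le> k \<and> int k \<le> m s - root_count s i}"

lemma generators_subset_simple_fractions:
  "right_generators \<union> left_generators \<subseteq> simple_fractions pole_bound"
proof
  fix x
  assume "x \<in> right_generators \<union> left_generators"
  then show "x \<in> simple_fractions pole_bound"
    unfolding right_generators_def left_generators_def
  proof (elim UnE CollectE exE conjE)
    fix s i k
    assume "x = inverse ((hvar - cst (s + 2 * of_nat i)) ^ k)"
      "s \<in> C\<omega>" "m s < 0" "1 \<le> k" "int k \<le> - m s"
    then show ?thesis
      using pole_bound_right unfolding hvar_minus_cst_power simple_fractions_def
      by (intro CollectI exI[of _ "s + 2 * of_nat i"] exI[of _ k]) auto
  next
    fix s i k
    assume "x = inverse ((hvar - cst s + cst (2 * of_nat i)) ^ k)"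
      "s \<in> C\<omega>" "0 < m s" "1 \<le> i" "1 \<le> k" "int k \<le> m s - root_count s i"
    then show ?thesis
      using pole_bound_left unfolding hvar_shift_power simple_fractions_def
      by (intro CollectI exI[of _ "s - 2 * of_nat i"] exI[of _ k]) auto
  qed
qed

lemma simple_fractions_subset_generators:
  "simple_fractions pole_bound \<subseteq> right_generators \<union> left_generators"
proof
  fix x
  assume "x \<in> simple_fractions pole_bound"
  then obtain w k where x: "x = inverse (to_fract ([:-w, 1:] ^ k))"
    and k: "1 \<le> k" "k \<le> pole_bound w"
    unfolding simple_fractions_def by blast
  obtain s n where s: "s \<in> C\<omega>" and w: "w = s + 2 * of_int n"
    by (rule strip_cases)
  consider "m s < 0" "0 \<le> n" | "0 < m s" "n < 0"
    using k pole_bound_strip[OF s, of n, folded w] by (auto split: if_splits)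
  then show "x \<in> right_generators \<union> left_generators"
  proof cases
    case 1
    then have "w = s + 2 * of_nat (nat n)"
      by (simp add: w)
    then have "x = inverse ((hvar - cst (s + 2 * of_nat (nat n))) ^ k)" "int k \<le> - m s"
      using k pole_bound_right[OF s 1(1), of "nat n"] unfolding hvar_minus_cst_power
      by (simp_all add: x)
    then show ?thesis
      using 1 s k unfolding right_generators_def by blast
  next
    case 2
    then have "w = s - 2 * of_nat (nat (- n))"
      by (simp add: w)
    then have "x = inverse ((hvar - cst s + cst (2 * of_nat (nat (- n)))) ^ k)"
      "int k \<le> m s - root_count s (nat (- n))" "1 \<le> nat (- n)"
      using 2 k pole_bound_left[OF s 2(1), of "nat (- n)"] unfolding hvar_shift_power
      by (simp_all add: x)
    then show ?thesis
      using 2 s k unfolding left_generators_def by blast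
  qed
qed

lemma generators_eq: "right_generators \<union> left_generators = simple_fractions pole_bound"
  using generators_subset_simple_fractions simple_fractions_subset_generators by (rule equalityI)

end

theorem theorem9:
  fixes \<theta> r1 r2 c :: complex and m :: "complex \<Rightarrow> int" and \<omega> :: real
    and C\<omega> :: "complex set" and u :: ratfun and K :: "ratfun set"
  assumes roots: "[:\<theta> - 1, -2, -1:] = - ([:-r1, 1:] * [:-r2, 1:])"
    and omega: "\<omega> = 3 + max (Re r1) (Re r2)"
    and Comega: "C\<omega> = {z. \<omega> \<le> Re z \<and> Re z < \<omega> + 2}"
    and c_nz: "c \<noteq> 0"
    and m_fin: "finite {t. m t \<noteq> 0}"
    and m_supp: "\<forall>t. m t \<noteq> 0 \<longrightarrow> t \<in> C\<omega>"
    and u_def: "u = cst c * (\<Prod>t\<in>{t. m t \<noteq> 0}. (hvar - cst t) powi (m t))"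
    and K_def: "K = cspan (
         {to_fract p | p. True}
       \<union> {inverse ((hvar - cst (s + 2 * of_nat i)) ^ k) | s i k.
            s \<in> C\<omega> \<and> m s < 0 \<and> 1 \<le> k \<and> int k \<le> - m s}
       \<union> {inverse ((hvar - cst s + cst (2 * of_nat i)) ^ k) | s i k.
            s \<in> C\<omega> \<and> m s > 0 \<and> 1 \<le> i \<and> 1 \<le> k \<and>
            int k \<le> m s - ((if r1 \<in> {s - 2 * of_nat l | l. 2 \<le> l \<and> l \<le> i} then 1 else 0)
                        + (if r2 \<in> {s - 2 * of_nat l | l. 2 \<le> l \<and> l \<le> i} then 1 else 0))})"
  shows "K = L_u \<theta> u"
proof -
  interpret Lu_setting \<theta> r1 r2 c m \<omega> C\<omega> u
    using roots omega Comega c_nz m_fin m_supp u_def by unfold_locales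
  have "K = cspan ({to_fract p | p. True} \<union> simple_fractions pole_bound)"
    unfolding K_def root_count_def[symmetric] right_generators_def[symmetric]
      left_generators_def[symmetric] Un_assoc generators_eq ..
  also have "\<dots> = bounded_poles pole_bound"
    by (rule bounded_poles_eq_cspan[symmetric])
  also have "\<dots> = L_u \<theta> u"
    by (rule L_u_eq_bounded_poles[symmetric])
  finally show ?thesis .
qed

end
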